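(* In the setting of the context, assume $q<q_c$, let $\beta\in(0,1)$, and suppose $\bar\delta(q)>0$ and $$N_q>\frac{\log(2/\beta)}{2\bar\delta(q)^2}.$$ Then with probability at least $1-\beta$ (over the samples) the following holds: if $\hat q<q_c$, then $\hat K$ mean-square stabilizes the system.
   Context: Let $A\in\mathbb{R}^{n\times n}$, $B\in\mathbb{R}^{n\times m}$ with $(A,B)$ stabilizable, and let $Q$, $R$ be symmetric positive definite. Consider $x_{t+1}=Ax_t+\lambda_tBu_t$, $t\ge0$, with $x_0$ random with finite mean and covariance and $\{\lambda_t\}$ i.i.d. Bernoulli, independent of $x_0$, with $\mathcal{P}(\lambda_t=0)=q$, $q\in(0,1)$ unknown. The estimate is $\hat q=\frac1{N_q}\sum_{i=1}^{N_q}(1-\lambda_i)$ from $N_q$ i.i.d. samples $\lambda_1,\dots,\lambda_{N_q}$ with the same Bernoulli law. For $p\in[0,1)$ the modified Riccati equation with parameter $p$ is $X=Q+A^\top XA-(1-p)A^\top XB(R+B^\top XB)^{-1}B^\top XA$; $q_c$ is the critical loss probability such that for every $p\in[0,q_c)$ this equation has a unique positive definite solution. For $\hat q\in[0,q_c)$ let $\hat P$ be the positive definite solution for parameter $\hat q$ and $\hat K=-(R+B^\top\hat PB)^{-1}B^\top\hat PA$; $\hat K$ mean-square stabilizes the system if the closed loop $x_{t+1}=(A+\lambda_tB\hat K)x_t$ satisfies $\lim_{t\to\infty}\mathbb{E}\{x_t^\top x_t\}=0$. Define $\mathcal C(q,\hat q)=Q+(1-q)\hat K^\top R\hat K-(q-\hat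 q)A^\top\hat PB(R+B^\top\hat PB)^{-1}B^\top\hat PA$ and the stability threshold $\bar\delta(q)=\sup\{\delta\ge0:\ \mathcal C(q,\hat q)\succ0 \text{ for all } \hat q\in[0,q_c)\text{ with } q-\hat q<\delta\}$. *)

theory Defs
  imports "HOL-Analysis.Analysis" "HOL-Probability.Probability"
begin

definition posdef :: "real^'n^'n \<Rightarrow> bool" where
  "posdef X \<longleftrightarrow> transpose X = X \<and> (\<forall>x. x \<noteq> 0 \<longrightarrow> x \<bullet> (X *v x) > 0)"

definition stabilizable :: "real^'n^'n \<Rightarrow> real^'m^'n \<Rightarrow> bool" where
  "stabilizable A B \<longleftrightarrow>
     (\<exists>K :: real^'n^'m. \<forall>x0. (\<lambda>t. ((\<lambda>x. (A + B ** K) *v x) ^^ t) x0) \<longlonglongrightarrow> 0)"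

definition mre :: "real^'n^'n \<Rightarrow> real^'m^'n \<Rightarrow> real^'n^'n \<Rightarrow> real^'m^'m
                   \<Rightarrow> real \<Rightarrow> real^'n^'n \<Rightarrow> bool" where
  "mre A B Q R p X \<longleftrightarrow>
     X = Q + transpose A ** X ** A
         - (1 - p) *\<^sub>R (transpose A ** X ** B ** matrix_inv (R + transpose B ** X ** B)
                          ** transpose B ** X ** A)"

definition Phat :: "real^'n^'n \<Rightarrow> real^'m^'n \<Rightarrow> real^'n^'n \<Rightarrow> real^'m^'m
                   \<Rightarrow> real \<Rightarrow> real^'n^'n" where
  "Phat A B Q R p = (THE X. posdef X \<and> mre A B Q R p X)"

definition Khat :: "real^'n^'n \<Rightarrow> real^'m^'n \<Rightarrow> real^'n^'n \<Rightarrow> real^'m^'m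
                   \<Rightarrow> real \<Rightarrow> real^'n^'m" where
  "Khat A B Q R p = (let P = Phat A B Q R p in
      - (matrix_inv (R + transpose B ** P ** B) ** transpose B ** P ** A))"

primrec cl_state :: "real^'n^'n \<Rightarrow> real^'m^'n \<Rightarrow> real^'n^'m
                     \<Rightarrow> (nat \<Rightarrow> bool) \<Rightarrow> real^'n \<Rightarrow> nat \<Rightarrow> real^'n" where
  "cl_state A B K lam x0 0 = x0"
| "cl_state A B K lam x0 (Suc t) =
     (A + (if lam t then 1 else 0) *\<^sub>R (B ** K)) *v cl_state A B K lam x0 t"

(* E{x_t^T x_t}: x_0 ~ M independent of i.i.d. lambda_0..lambda_{t-1},
   with P(lambda_i = 0) = q, i.e. lambda_i = True with probability 1 - q *)
definition ms_energy :: "real^'n^'n \<Rightarrow> real^'m^'n \<Rightarrow> real^'n^'m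
                     \<Rightarrow> real \<Rightarrow> (real^'n) measure \<Rightarrow> nat \<Rightarrow> real" where
  "ms_energy A B K q M t =
     integral\<^sup>L (M \<Otimes>\<^sub>M measure_pmf (Pi_pmf {..<t} False (\<lambda>_. bernoulli_pmf (1 - q))))
       (\<lambda>(x0, lam). (cl_state A B K lam x0 t) \<bullet> (cl_state A B K lam x0 t))"

definition ms_stabilizes :: "real^'n^'n \<Rightarrow> real^'m^'n \<Rightarrow> real^'n^'m
                     \<Rightarrow> real \<Rightarrow> (real^'n) measure \<Rightarrow> bool" where
  "ms_stabilizes A B K q M \<longleftrightarrow> (ms_energy A B K q M \<longlonglongrightarrow> 0)"

definition Cmat :: "real^'n^'n \<Rightarrow> real^'m^'n \<Rightarrow> real^'n^'n \<Rightarrow> real^'m^'m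
                   \<Rightarrow> real \<Rightarrow> real \<Rightarrow> real^'n^'n" where
  "Cmat A B Q R q qh = (let P = Phat A B Q R qh; K = Khat A B Q R qh in
      Q + (1 - q) *\<^sub>R (transpose K ** R ** K)
        - (q - qh) *\<^sub>R (transpose A ** P ** B ** matrix_inv (R + transpose B ** P ** B)
                         ** transpose B ** P ** A))"

(* stability threshold, as an extended real (it is +infinity when the set is unbounded) *)
definition delta_bar :: "real^'n^'n \<Rightarrow> real^'m^'n \<Rightarrow> real^'n^'n \<Rightarrow> real^'m^'m
                   \<Rightarrow> real \<Rightarrow> real \<Rightarrow> ereal" where
  "delta_bar A B Q R qc q = Sup (ereal ` {\<delta>. \<delta> \<ge> 0 \<and>
      (\<forall>qh. 0 \<le> qh \<and> qh < qc \<and> q - qh < \<delta> \<longrightarrow> posdef (Cmat A B Q R q qh))})"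

definition qhat :: "nat \<Rightarrow> (nat \<Rightarrow> bool) \<Rightarrow> real" where
  "qhat N lam = (\<Sum>i\<in>{1..N}. (1 - of_bool (lam i))) / real N"

end

theory Submission
  imports Defs
begin

(* Fix an estimate qh < qc with C(q,qh) positive definite, let P be the Riccati solution for qh
   and K its gain. Completing the square in the Riccati equation gives, for V x = x'Px and the
   true loss probability q,
     (1 - q) V((A + BK)x) + q V(Ax) = V x - x'C(q,qh)x,
   so E V(x_t) contracts by a fixed factor per step and E|x_t|^2 tends to 0. By definition of the
   threshold this applies as soon as q - qh < \<delta> for a \<delta> below it with 2 N \<delta>^2 > ln(2/\<beta>).
   Since N(1 - qh) is binomial(N, 1 - q), Hoeffding's inequality bounds the probability of
   q - qh \<ge> \<delta> by exp(-2 N \<delta>^2) < \<beta>/2. *)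

abbreviation quad_form :: "real^'n^'n \<Rightarrow> real^'n \<Rightarrow> real" where
  "quad_form P x \<equiv> x \<bullet> (P *v x)"

abbreviation loss_pmf :: "real \<Rightarrow> nat \<Rightarrow> (nat \<Rightarrow> bool) pmf" where
  "loss_pmf q t \<equiv> Pi_pmf {..<t} False (\<lambda>_. bernoulli_pmf (1 - q))"

lemma inner_matrix_vector_transpose: "(u::real^'n) \<bullet> (X *v w) = (transpose X *v u) \<bullet> w"
  by (metis dot_lmul_matrix transpose_transpose vector_transpose_matrix)

lemma matrix_vector_inner_transpose: "(X *v u) \<bullet> (w::real^'n) = u \<bullet> (transpose X *v w)"
  by (metis inner_commute inner_matrix_vector_transpose)

lemma matrix_vector_mult_uminus: "A *v (- x) = - (A *v (x::'a::ring_1^'n))"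
  by (metis diff_0 matrix_vector_mult_0_right matrix_vector_mult_diff_distrib)

lemma quad_form_add: "quad_form (X + Y) x = quad_form X x + quad_form Y x"
  by (simp add: matrix_vector_mult_add_rdistrib inner_add_right)

lemma quad_form_diff: "quad_form (X - Y) x = quad_form X x - quad_form Y x"
  by (simp add: matrix_vector_mult_diff_rdistrib inner_diff_right)

lemma quad_form_scaleR: "quad_form (a *\<^sub>R X) x = a * quad_form X x"
  by (simp add: scaleR_matrix_vector_assoc[symmetric])

lemma quad_form_congruence: "quad_form (transpose X ** P ** X) x = quad_form P (X *v x)"
  by (simp only: matrix_vector_mul_assoc[symmetric] inner_matrix_vector_transpose transpose_transpose)

lemma posdef_quad_form_pos: "posdef X \<Longrightarrow> x \<noteq> 0 \<Longrightarrow> 0 < quad_form X x"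
  unfolding posdef_def by auto

lemma posdef_symmetric: "posdef X \<Longrightarrow> transpose X = X"
  unfolding posdef_def by auto

lemma posdef_quad_form_nonneg: "posdef X \<Longrightarrow> 0 \<le> quad_form X x"
  by (cases "x = 0") (auto dest: posdef_quad_form_pos[of X x])

lemma quad_form_upper_bound:
  obtains b :: real where "0 < b" "\<And>x. quad_form C x \<le> b * (x \<bullet> x)"
proof -
  obtain b where b: "0 < b" "\<And>x. norm (C *v x) \<le> norm x * b"
    using bounded_linear.pos_bounded[OF matrix_vector_mul_bounded_linear[of C]] by blast
  have "quad_form C x \<le> b * (x \<bullet> x)" for x
  proof -
    have "quad_form C x \<le> norm x * norm (C *v x)" by (rule norm_cauchy_schwarz)
    also have "\<dots> \<le> norm x * (norm x * b)" using b(2)[of x] by (simp add: mult_left_mono)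
    also have "\<dots> = b * (x \<bullet> x)" by (simp add: power2_norm_eq_inner[symmetric] power2_eq_square)
    finally show ?thesis .
  qed
  with b(1) show thesis by (rule that)
qed

lemma posdef_quad_form_lower_bound:
  assumes "posdef C"
  obtains c :: real where "0 < c" "\<And>x. c * ((x::real^'n) \<bullet> x) \<le> quad_form C x"
proof -
  have cont: "continuous_on (sphere 0 1) (\<lambda>x::real^'n. quad_form C x)"
    by (intro continuous_intros linear_continuous_on matrix_vector_mul_bounded_linear)
  obtain e :: "real^'n" where "norm e = 1" using vector_choose_size[of 1] by auto
  then have "sphere (0::real^'n) 1 \<noteq> {}" by auto
  then obtain x0 where x0: "x0 \<in> sphere 0 1"
      and x0_min: "\<And>y. y \<in> sphere 0 1 \<Longrightarrow> quad_form C x0 \<le> quad_form C y"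
    using continuous_attains_inf[OF compact_sphere _ cont] by blast
  define c where "c = quad_form C x0"
  have "x0 \<noteq> 0" using x0 by auto
  then have "0 < c" unfolding c_def by (rule posdef_quad_form_pos[OF assms])
  moreover have "c * (x \<bullet> x) \<le> quad_form C x" for x
  proof (cases "x = 0")
    case False
    define y where "y = (1 / norm x) *\<^sub>R x"
    have "y \<in> sphere 0 1" using False by (simp add: y_def)
    then have "c \<le> quad_form C y" using x0_min by (simp add: c_def)
    also have "quad_form C y = (quad_form C x) / (norm x)^2"
      by (simp add: y_def matrix_vector_mult_scaleR power2_eq_square)
    finally have "c * (norm x)^2 \<le> quad_form C x" using False by (simp add: field_simps)
    then show ?thesis by (simp add: power2_norm_eq_inner)
  qed simp
  ultimately show thesis by (rule that)
qed

lemma invertible_posdef_add_congruence: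
  fixes R :: "real^'m^'m" and B :: "real^'m^'n" and P :: "real^'n^'n"
  assumes "posdef R" and P_nonneg: "\<And>x. 0 \<le> quad_form P x"
  shows "invertible (R + transpose B ** P ** B)"
proof -
  have "x = 0" if "(R + transpose B ** P ** B) *v x = 0" for x
  proof (rule ccontr)
    assume "x \<noteq> 0"
    have "quad_form (R + transpose B ** P ** B) x = quad_form R x + quad_form P (B *v x)"
      by (simp only: quad_form_add quad_form_congruence)
    moreover have "0 < quad_form R x" using posdef_quad_form_pos[OF assms(1) \<open>x \<noteq> 0\<close>] .
    ultimately show False using that P_nonneg[of "B *v x"] by simp
  qed
  then show ?thesis using matrix_left_invertible_ker invertible_left_inverse by metis
qed

lemma matrix_inv_right: "invertible S \<Longrightarrow> (S::'a::semiring_1^'n^'n) ** matrix_inv S = mat 1"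
  unfolding invertible_def matrix_inv_def by (rule someI_ex[THEN conjunct1])

lemma inner_symmetric_matrix_vector_mult:
  assumes "transpose P = P"
  shows "(y::real^'n) \<bullet> (P *v (B *v m)) = (transpose B *v (P *v y)) \<bullet> m"
  by (metis assms inner_matrix_vector_transpose matrix_vector_inner_transpose inner_commute)

lemma quad_form_complete_square:
  fixes P :: "real^'n^'n" and B :: "real^'m^'n" and R :: "real^'m^'m"
  assumes P_sym: "transpose P = P"
    and m: "(R + transpose B ** P ** B) *v m = transpose B *v (P *v y)"
  shows "quad_form P (y - B *v m)
           = quad_form P y - (transpose B *v (P *v y)) \<bullet> m - quad_form R m"
proof -
  define s where "s = transpose B *v (P *v y)"
  have cross1: "y \<bullet> (P *v (B *v m)) = s \<bullet> m"
    unfolding s_def by (rule inner_symmetric_matrix_vector_mult[OF P_sym])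
  have cross2: "(B *v m) \<bullet> (P *v y) = s \<bullet> m"
    by (simp add: matrix_vector_inner_transpose s_def inner_commute)
  have "quad_form P (B *v m) = quad_form (R + transpose B ** P ** B) m - quad_form R m"
    by (simp add: quad_form_add quad_form_congruence)
  then have square: "quad_form P (B *v m) = s \<bullet> m - quad_form R m"
    by (simp add: m s_def inner_commute)
  have "quad_form P (y - B *v m)
      = quad_form P y - y \<bullet> (P *v (B *v m)) - (B *v m) \<bullet> (P *v y) + quad_form P (B *v m)"
    by (simp add: matrix_vector_mult_diff_distrib inner_diff_left inner_diff_right)
  then show ?thesis unfolding cross1 cross2 square s_def by simp
qed

lemma riccati_lyapunov_identity:
  fixes A P Q :: "real^'n^'n" and B :: "real^'m^'n" and R :: "real^'m^'m" and q qh :: real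
  assumes P_pd: "posdef P" and R_pd: "posdef R" and riccati: "mre A B Q R qh P"
  defines "S \<equiv> R + transpose B ** P ** B"
  defines "K \<equiv> - (matrix_inv S ** transpose B ** P ** A)"
  defines "C \<equiv> Q + (1 - q) *\<^sub>R (transpose K ** R ** K)
        - (q - qh) *\<^sub>R (transpose A ** P ** B ** matrix_inv S ** transpose B ** P ** A)"
  shows "(1 - q) * quad_form P ((A + B ** K) *v x)
           + q * quad_form P (A *v x) = quad_form P x - quad_form C x"
proof -
  define G where "G = transpose A ** P ** B ** matrix_inv S ** transpose B ** P ** A"
  define y where "y = A *v x"
  define s where "s = transpose B *v (P *v y)"
  define m where "m = matrix_inv S *v s"
  have S_m: "S *v m = s"
    unfolding m_def matrix_vector_mul_assoc S_def
    by (simp add: matrix_inv_right[OF invertible_posdef_add_congruence[OF R_pd posdef_quad_form_nonneg[OF P_pd]]])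
  have G_x: "quad_form G x = s \<bullet> m"
  proof -
    have "quad_form G x = x \<bullet> (transpose A *v (P *v (B *v m)))"
      unfolding G_def m_def s_def y_def by (simp only: matrix_vector_mul_assoc matrix_mul_assoc)
    also have "\<dots> = y \<bullet> (P *v (B *v m))"
      by (simp only: inner_matrix_vector_transpose transpose_transpose y_def)
    also have "\<dots> = s \<bullet> m"
      unfolding s_def by (rule inner_symmetric_matrix_vector_mult[OF posdef_symmetric[OF P_pd]])
    finally show ?thesis .
  qed
  have K_x: "K *v x = - m"
    by (simp add: K_def m_def s_def y_def matrix_vector_mul_assoc matrix_mul_assoc
        matrix_vector_mult_diff_rdistrib[of 0, simplified])
  have "quad_form P x = quad_form (Q + transpose A ** P ** A - (1 - qh) *\<^sub>R G) x"
    using riccati unfolding mre_def G_def S_def by metis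
  then have V_x: "quad_form P x = quad_form Q x + quad_form P y - (1 - qh) * (s \<bullet> m)"
    by (simp only: quad_form_add quad_form_diff quad_form_scaleR quad_form_congruence G_x y_def)
  have C_x: "quad_form C x = quad_form Q x + (1 - q) * quad_form R m - (q - qh) * (s \<bullet> m)"
    unfolding C_def G_def[symmetric]
    by (simp add: quad_form_add quad_form_diff quad_form_scaleR quad_form_congruence G_x K_x
        matrix_vector_mult_uminus)
  have "(A + B ** K) *v x = y - B *v m"
    by (simp add: matrix_vector_mult_add_rdistrib matrix_vector_mul_assoc[symmetric] K_x y_def
        matrix_vector_mult_uminus)
  then have V_cl: "quad_form P ((A + B ** K) *v x)
      = quad_form P y - s \<bullet> m - quad_form R m"
    using quad_form_complete_square[OF posdef_symmetric[OF P_pd] S_m[unfolded S_def s_def]]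
    by (simp add: s_def)
  show ?thesis unfolding V_x C_x V_cl y_def[symmetric] by (simp add: algebra_simps)
qed

lemma posdef_lyapunov_contraction:
  assumes "posdef P" "posdef C"
  obtains \<rho> :: real where "0 \<le> \<rho>" "\<rho> < 1"
    "\<And>z::real^'n. quad_form P z - quad_form C z \<le> \<rho> * quad_form P z"
proof -
  obtain c where c: "0 < c" "\<And>z. c * ((z::real^'n) \<bullet> z) \<le> quad_form C z"
    using posdef_quad_form_lower_bound[OF assms(2)] by blast
  obtain b where b: "0 < b" "\<And>z. quad_form P z \<le> b * (z \<bullet> z)"
    using quad_form_upper_bound by blast
  define c' where "c' = min c b"
  have c': "0 < c'" "c' \<le> b" using c b by (auto simp: c'_def)
  have "quad_form P z - quad_form C z \<le> (1 - c' / b) * quad_form P z" for z :: "real^'n"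
  proof -
    have "c' * (z \<bullet> z) \<le> quad_form C z"
      using c(2)[of z] mult_right_mono[of c' c "z \<bullet> z"] by (simp add: c'_def)
    moreover have "(c' / b) * quad_form P z \<le> c' * (z \<bullet> z)"
      using b c' mult_left_mono[OF b(2)[of z], of "c' / b"] by simp
    ultimately show ?thesis by (simp add: algebra_simps)
  qed
  moreover have "0 \<le> 1 - c' / b" "1 - c' / b < 1" using b c' by auto
  ultimately show thesis using that by blast
qed

lemma cl_state_fun_upd_future: "t \<le> s \<Longrightarrow> cl_state A B K (f(s := b)) x t = cl_state A B K f x t"
  by (induction t) auto

lemma cl_state_Suc_fun_upd:
  "cl_state A B K (f(t := b)) x (Suc t) = (A + (if b then 1 else 0) *\<^sub>R (B ** K)) *v cl_state A B K f x t"
  by (simp add: cl_state_fun_upd_future)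

lemma measurable_cl_state:
  assumes "(\<lambda>x. x) \<in> borel_measurable M"
  shows "(\<lambda>p. cl_state A B K (snd p) (fst p) t) \<in> borel_measurable (M \<Otimes>\<^sub>M measure_pmf N)"
proof (induction t)
  case 0
  then show ?case using measurable_compose[OF measurable_fst assms] by simp
next
  case (Suc t)
  have cl_Suc: "(\<lambda>p. cl_state A B K (snd p) (fst p) (Suc t)) =
     (\<lambda>p. if snd p t then (A + B ** K) *v cl_state A B K (snd p) (fst p) t
          else A *v cl_state A B K (snd p) (fst p) t)"
    by (rule ext) simp
  have mult_cont: "continuous_on UNIV ((*v) X)" for X :: "real^'a^'a"
    by (intro linear_continuous_on matrix_vector_mul_bounded_linear)
  have [measurable]: "(\<lambda>p. snd p t) \<in> measurable (M \<Otimes>\<^sub>M measure_pmf N) (count_space UNIV)"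
    by (rule measurable_compose[OF measurable_snd]) simp
  have "{p \<in> space (M \<Otimes>\<^sub>M measure_pmf N). snd p t} \<in> sets (M \<Otimes>\<^sub>M measure_pmf N)"
    by measurable
  then show ?case unfolding cl_Suc
    by (intro measurable_If borel_measurable_continuous_on[OF mult_cont] Suc)
qed

lemma nn_integral_quad_form_cl_state_Suc_le:
  fixes A P :: "real^'n^'n" and B :: "real^'m^'n" and K :: "real^'n^'m"
  assumes q: "0 \<le> q" "q \<le> 1" and \<rho>: "0 \<le> \<rho>"
    and decrease: "\<And>z. (1 - q) * quad_form P ((A + B ** K) *v z)
           + q * quad_form P (A *v z) \<le> \<rho> * quad_form P z"
    and P_nonneg: "\<And>z. 0 \<le> quad_form P z"
  shows "(\<integral>\<^sup>+l. ennreal (quad_form P (cl_state A B K l x (Suc t)))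
            \<partial>loss_pmf q (Suc t))
       \<le> ennreal \<rho> * (\<integral>\<^sup>+l. ennreal (quad_form P (cl_state A B K l x t))
            \<partial>loss_pmf q t)"
proof -
  define N where "N = loss_pmf q t"
  define V where "V = (\<lambda>z::real^'n. quad_form P z)"
  define z where "z = (\<lambda>l. cl_state A B K l x t)"
  have "loss_pmf q (Suc t)
        = map_pmf (\<lambda>(y,f). f(t:=y)) (pair_pmf (bernoulli_pmf (1 - q)) N)"
    unfolding lessThan_Suc N_def by (rule Pi_pmf_insert) auto
  then have "(\<integral>\<^sup>+l. ennreal (V (cl_state A B K l x (Suc t)))
            \<partial>loss_pmf q (Suc t))
      = (\<integral>\<^sup>+y. \<integral>\<^sup>+f. ennreal (V (cl_state A B K (f(t:=y)) x (Suc t))) \<partial>N \<partial>bernoulli_pmf (1 - q))"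
    by (simp add: nn_integral_pair_pmf')
  also have "\<dots> = (\<integral>\<^sup>+y. \<integral>\<^sup>+f. ennreal (V ((A + (if y then 1 else 0) *\<^sub>R (B ** K)) *v z f)) \<partial>N
                     \<partial>bernoulli_pmf (1 - q))"
    unfolding cl_state_Suc_fun_upd z_def ..
  also have "\<dots> = (\<integral>\<^sup>+f. ennreal (V ((A + B ** K) *v z f)) * ennreal (1 - q)
                   + ennreal (V (A *v z f)) * ennreal q \<partial>N)"
    using q by (simp add: nn_integral_bernoulli_pmf nn_integral_add nn_integral_multc)
  also have "\<dots> \<le> (\<integral>\<^sup>+f. ennreal \<rho> * ennreal (V (z f)) \<partial>N)"
  proof (rule nn_integral_mono)
    fix f
    have "ennreal (V ((A + B ** K) *v z f)) * ennreal (1 - q) + ennreal (V (A *v z f)) * ennreal q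
        = ennreal ((1 - q) * V ((A + B ** K) *v z f) + q * V (A *v z f))"
      using q P_nonneg unfolding V_def by (simp add: ennreal_mult' ennreal_plus mult.commute)
    also have "\<dots> \<le> ennreal (\<rho> * V (z f))"
      using decrease[of "z f"] unfolding V_def by (rule ennreal_leI)
    finally show "ennreal (V ((A + B ** K) *v z f)) * ennreal (1 - q) + ennreal (V (A *v z f)) * ennreal q
        \<le> ennreal \<rho> * ennreal (V (z f))"
      using \<rho> P_nonneg[of "z f"] unfolding V_def by (simp add: ennreal_mult)
  qed
  also have "\<dots> = ennreal \<rho> * (\<integral>\<^sup>+f. ennreal (V (z f)) \<partial>N)"
    by (simp add: nn_integral_cmult)
  finally show ?thesis unfolding V_def z_def N_def .
qed

lemma nn_integral_quad_form_cl_state_le: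
  fixes A P :: "real^'n^'n" and B :: "real^'m^'n" and K :: "real^'n^'m"
  assumes q: "0 \<le> q" "q \<le> 1" and \<rho>: "0 \<le> \<rho>"
    and decrease: "\<And>z. (1 - q) * quad_form P ((A + B ** K) *v z)
           + q * quad_form P (A *v z) \<le> \<rho> * quad_form P z"
    and P_nonneg: "\<And>z. 0 \<le> quad_form P z"
  shows "(\<integral>\<^sup>+l. ennreal (quad_form P (cl_state A B K l x t))
            \<partial>loss_pmf q t)
       \<le> ennreal (\<rho> ^ t * quad_form P x)"
proof (induction t)
  case 0
  then show ?case by simp
next
  case (Suc t)
  have "(\<integral>\<^sup>+l. ennreal (quad_form P (cl_state A B K l x (Suc t)))
            \<partial>loss_pmf q (Suc t))
      \<le> ennreal \<rho> * ennreal (\<rho> ^ t * quad_form P x)"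
    using nn_integral_quad_form_cl_state_Suc_le[OF q \<rho> decrease P_nonneg] mult_left_mono[OF Suc]
    by (meson order_trans zero_le)
  then show ?case
    using \<rho> P_nonneg[of x] by (simp add: ennreal_mult[symmetric] mult.assoc)
qed

lemma nn_integral_inner_cl_state_le:
  fixes A P :: "real^'n^'n" and B :: "real^'m^'n" and K :: "real^'n^'m"
  assumes P_pd: "posdef P" and q: "0 \<le> q" "q \<le> 1" and \<rho>: "0 \<le> \<rho>"
    and decrease: "\<And>z. (1 - q) * quad_form P ((A + B ** K) *v z)
           + q * quad_form P (A *v z) \<le> \<rho> * quad_form P z"
  obtains D where "0 \<le> D"
    "\<And>x t. (\<integral>\<^sup>+l. ennreal (cl_state A B K l x t \<bullet> cl_state A B K l x t)
              \<partial>loss_pmf q t)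
           \<le> ennreal (\<rho> ^ t * D * (x \<bullet> x))"
proof -
  obtain c where c: "0 < c" "\<And>z. c * ((z::real^'n) \<bullet> z) \<le> quad_form P z"
    using posdef_quad_form_lower_bound[OF P_pd] by blast
  obtain b where b: "0 < b" "\<And>z. quad_form P z \<le> b * (z \<bullet> z)"
    using quad_form_upper_bound by blast
  note P_nonneg = posdef_quad_form_nonneg[OF P_pd]
  have "(\<integral>\<^sup>+l. ennreal (cl_state A B K l x t \<bullet> cl_state A B K l x t)
            \<partial>loss_pmf q t)
       \<le> ennreal (\<rho> ^ t * (b / c) * (x \<bullet> x))" for x t
  proof -
    let ?N = "loss_pmf q t"
    have "(\<integral>\<^sup>+l. ennreal (cl_state A B K l x t \<bullet> cl_state A B K l x t) \<partial>?N)
        \<le> (\<integral>\<^sup>+l. ennreal (1 / c) * ennreal (quad_form P (cl_state A B K l x t)) \<partial>?N)"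
    proof (rule nn_integral_mono)
      fix l
      let ?z = "cl_state A B K l x t"
      have "?z \<bullet> ?z \<le> (1 / c) * (quad_form P ?z)" using c by (simp add: field_simps)
      then show "ennreal (?z \<bullet> ?z) \<le> ennreal (1 / c) * ennreal (quad_form P ?z)"
        using c(1) P_nonneg[of ?z] by (simp add: ennreal_mult[symmetric] ennreal_leI)
    qed
    also have "\<dots> = ennreal (1 / c) * (\<integral>\<^sup>+l. ennreal (quad_form P (cl_state A B K l x t)) \<partial>?N)"
      by (simp add: nn_integral_cmult)
    also have "\<dots> \<le> ennreal (1 / c) * ennreal (\<rho> ^ t * quad_form P x)"
      by (rule mult_left_mono[OF nn_integral_quad_form_cl_state_le[OF q \<rho> decrease P_nonneg]]) simp
    also have "\<dots> \<le> ennreal (\<rho> ^ t * (b / c) * (x \<bullet> x))"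
    proof -
      have "\<rho> ^ t * quad_form P x \<le> \<rho> ^ t * (b * (x \<bullet> x))" using \<rho> b(2) by (simp add: mult_left_mono)
      then have "(1 / c) * (\<rho> ^ t * quad_form P x) \<le> \<rho> ^ t * (b / c) * (x \<bullet> x)"
        using c(1) by (simp add: field_simps)
      then show ?thesis
        using c(1) \<rho> P_nonneg[of x] by (simp add: ennreal_mult[symmetric] ennreal_leI)
    qed
    finally show ?thesis .
  qed
  moreover have "0 \<le> b / c" using b c by simp
  ultimately show thesis using that by blast
qed

lemma ms_energy_nonneg: "0 \<le> ms_energy A B K q M t"
  unfolding ms_energy_def by (rule integral_nonneg_AE) (simp add: split_beta)

lemma ms_energy_le:
  fixes A :: "real^'n^'n" and B :: "real^'m^'n" and K :: "real^'n^'m"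
  assumes M_prob: "prob_space M" and M_sets: "sets M = sets borel"
    and M_cov: "integrable M (\<lambda>x. x \<bullet> x)" and a: "0 \<le> a"
    and bound: "\<And>x. (\<integral>\<^sup>+l. ennreal (cl_state A B K l x t \<bullet> cl_state A B K l x t)
              \<partial>loss_pmf q t) \<le> ennreal (a * (x \<bullet> x))"
  shows "ms_energy A B K q M t \<le> a * (\<integral>x. x \<bullet> x \<partial>M)"
proof -
  interpret M: prob_space M by (rule M_prob)
  define N where "N = loss_pmf q t"
  let ?F = "\<lambda>p::(real^'n) \<times> (nat \<Rightarrow> bool). cl_state A B K (snd p) (fst p) t \<bullet> cl_state A B K (snd p) (fst p) t"
  have id_meas: "(\<lambda>x. x) \<in> borel_measurable M" by (subst measurable_cong_sets[OF M_sets refl]) simp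
  have F_meas: "?F \<in> borel_measurable (M \<Otimes>\<^sub>M measure_pmf N)"
    by (intro borel_measurable_inner measurable_cl_state[OF id_meas])
  have energy: "ms_energy A B K q M t = enn2real (\<integral>\<^sup>+p. ennreal (?F p) \<partial>(M \<Otimes>\<^sub>M measure_pmf N))"
    unfolding ms_energy_def N_def[symmetric] case_prod_beta by (rule integral_eq_nn_integral[OF F_meas]) simp
  have "(\<integral>\<^sup>+p. ennreal (?F p) \<partial>(M \<Otimes>\<^sub>M measure_pmf N))
      = (\<integral>\<^sup>+x. \<integral>\<^sup>+l. ennreal (?F (x, l)) \<partial>N \<partial>M)"
    using sigma_finite_measure.nn_integral_fst[OF
        prob_space_imp_sigma_finite[OF measure_pmf.prob_space_axioms]
        measurable_compose[OF F_meas measurable_ennreal]]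
    by simp
  also have "\<dots> \<le> (\<integral>\<^sup>+x. ennreal (a * (x \<bullet> x)) \<partial>M)"
    by (rule nn_integral_mono) (use bound in \<open>simp add: N_def\<close>)
  also have "\<dots> = ennreal (a * (\<integral>x. x \<bullet> x \<partial>M))"
    using a M_cov by (subst nn_integral_eq_integral) auto
  finally show ?thesis unfolding energy using a by (simp add: enn2real_leI)
qed

lemma ms_stabilizes_of_lyapunov:
  fixes A P C :: "real^'n^'n" and B :: "real^'m^'n" and K :: "real^'n^'m"
  assumes P_pd: "posdef P" and C_pd: "posdef C"
    and M_prob: "prob_space M" and M_sets: "sets M = sets borel"
    and M_cov: "integrable M (\<lambda>x. x \<bullet> x)"
    and q: "0 \<le> q" "q \<le> 1"
    and lyapunov: "\<And>x. (1 - q) * quad_form P ((A + B ** K) *v x)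
           + q * quad_form P (A *v x) = quad_form P x - quad_form C x"
  shows "ms_stabilizes A B K q M"
proof -
  obtain \<rho> where \<rho>: "0 \<le> \<rho>" "\<rho> < 1"
    and contraction: "\<And>z::real^'n. quad_form P z - quad_form C z \<le> \<rho> * quad_form P z"
    using posdef_lyapunov_contraction[OF P_pd C_pd] by blast
  have decrease: "(1 - q) * quad_form P ((A + B ** K) *v z)
           + q * quad_form P (A *v z) \<le> \<rho> * quad_form P z" for z
    using lyapunov[of z] contraction[of z] by simp
  obtain D where D: "0 \<le> D"
    and bound: "\<And>x t. (\<integral>\<^sup>+l. ennreal (cl_state A B K l x t \<bullet> cl_state A B K l x t)
              \<partial>loss_pmf q t)
           \<le> ennreal (\<rho> ^ t * D * (x \<bullet> x))"
    using nn_integral_inner_cl_state_le[OF P_pd q \<rho>(1) decrease] by blast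
  define I where "I = (\<integral>x. x \<bullet> x \<partial>M)"
  have upper: "ms_energy A B K q M t \<le> \<rho> ^ t * D * I" for t
    unfolding I_def by (rule ms_energy_le[OF M_prob M_sets M_cov _ bound]) (use \<rho> D in simp)
  have decay: "(\<lambda>t. \<rho> ^ t * D * I) \<longlonglongrightarrow> 0"
    using tendsto_mult_right[OF LIMSEQ_realpow_zero[OF \<rho>], of "D * I"] by (simp add: mult.assoc)
  show ?thesis unfolding ms_stabilizes_def
    by (rule tendsto_sandwich[OF _ _ tendsto_const decay]) (auto intro!: always_eventually ms_energy_nonneg upper)
qed

lemma ms_stabilizes_Khat:
  fixes A Q :: "real^'n^'n" and B :: "real^'m^'n" and R :: "real^'m^'m"
    and M :: "(real^'n) measure"
  assumes R_pd: "posdef R"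
    and M_prob: "prob_space M" and M_sets: "sets M = sets borel"
    and M_cov: "integrable M (\<lambda>x. x \<bullet> x)"
    and q: "0 \<le> q" "q \<le> 1"
    and unique: "\<exists>!X. posdef X \<and> mre A B Q R qh X"
    and C_pd: "posdef (Cmat A B Q R q qh)"
  shows "ms_stabilizes A B (Khat A B Q R qh) q M"
proof -
  define P where "P = Phat A B Q R qh"
  have P: "posdef P" "mre A B Q R qh P"
    unfolding P_def Phat_def using theI'[OF unique] by auto
  show ?thesis
    by (rule ms_stabilizes_of_lyapunov[OF P(1) C_pd M_prob M_sets M_cov q])
      (use riccati_lyapunov_identity[OF P(1) R_pd P(2), of q] in \<open>simp add: Cmat_def Khat_def P_def Let_def\<close>)
qed

lemma qhat_nonneg: "0 \<le> qhat N lam"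
  unfolding qhat_def by (intro divide_nonneg_nonneg sum_nonneg) auto

lemma qhat_eq_card: "0 < N \<Longrightarrow> qhat N lam = 1 - real (card {i\<in>{1..N}. lam i}) / real N"
proof -
  assume "0 < N"
  have "{i\<in>{1..N}. lam i} = {1..N} \<inter> {i. lam i}" by auto
  then have "(\<Sum>i\<in>{1..N}. of_bool (lam i) :: real) = real (card {i\<in>{1..N}. lam i})"
    by (simp add: sum_of_bool_eq)
  then show ?thesis using \<open>0 < N\<close> by (simp add: qhat_def sum_subtractf diff_divide_distrib)
qed

lemma prob_qhat_close_ge:
  assumes q: "0 \<le> q" "q \<le> 1" and N: "0 < N" and \<delta>: "0 \<le> \<delta>"
  shows "1 - exp (- 2 * real N * \<delta>\<^sup>2)
           \<le> measure_pmf.prob (Pi_pmf {1..N} False (\<lambda>_. bernoulli_pmf (1 - q))) {lam. q - qhat N lam < \<delta>}"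
proof -
  define coins where "coins = Pi_pmf {1..N} False (\<lambda>_. bernoulli_pmf (1 - q))"
  define count where "count = (\<lambda>lam::nat \<Rightarrow> bool. card {i\<in>{1..N}. lam i})"
  have binomial: "binomial_pmf N (1 - q) = map_pmf count coins"
    unfolding coins_def count_def by (rule binomial_pmf_altdef') (use q in auto)
  have "{lam. \<delta> \<le> q - qhat N lam} = count -` {k. (1 - q) + \<delta> \<le> real k / real N}"
    by (auto simp: qhat_eq_card[OF N] count_def)
  then have "measure_pmf.prob coins {lam. \<delta> \<le> q - qhat N lam}
      = measure_pmf.prob (binomial_pmf N (1 - q)) {k. (1 - q) + \<delta> \<le> real k / real N}"
    by (simp add: binomial)
  also have "\<dots> \<le> exp (- 2 * real N * \<delta>\<^sup>2)"
    using binomial_distribution.prob_ge'[of "1 - q" N \<delta>] q N \<delta>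
    by (simp add: binomial_distribution_def)
  finally have "measure_pmf.prob coins {lam. \<delta> \<le> q - qhat N lam} \<le> exp (- 2 * real N * \<delta>\<^sup>2)" .
  moreover have "measure_pmf.prob coins (space coins - {lam. \<delta> \<le> q - qhat N lam})
      = 1 - measure_pmf.prob coins {lam. \<delta> \<le> q - qhat N lam}"
    by (rule measure_pmf.prob_compl) simp
  moreover have "space coins - {lam. \<delta> \<le> q - qhat N lam} = {lam. q - qhat N lam < \<delta>}" by auto
  ultimately show ?thesis unfolding coins_def by simp
qed

lemma delta_bar_witness:
  assumes L: "0 < L" and d_pos: "0 < delta_bar A B Q R qc q"
    and N_large: "ereal L / (2 * (delta_bar A B Q R qc q)\<^sup>2) < ereal (real N)"
  obtains \<delta> where "0 \<le> \<delta>"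
    "\<And>qh. 0 \<le> qh \<Longrightarrow> qh < qc \<Longrightarrow> q - qh < \<delta> \<Longrightarrow> posdef (Cmat A B Q R q qh)"
    "L < 2 * real N * \<delta>\<^sup>2"
proof -
  define S where "S = {\<delta>. 0 \<le> \<delta> \<and> (\<forall>qh. 0 \<le> qh \<and> qh < qc \<and> q - qh < \<delta> \<longrightarrow> posdef (Cmat A B Q R q qh))}"
  define r where "r = sqrt (L / (2 * real N))"
  have "0 < N \<and> ereal r < delta_bar A B Q R qc q"
  proof (cases "delta_bar A B Q R qc q")
    case (real d)
    then have d: "0 < d" and N_d: "L / (2 * d\<^sup>2) < real N"
      using d_pos N_large by (simp_all add: power2_eq_square)
    moreover have "0 < L / (2 * d\<^sup>2)" using L d by simp
    ultimately have "0 < real N" by linarith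
    moreover from this have "r\<^sup>2 < d\<^sup>2" using L N_d d by (simp add: r_def field_simps)
    ultimately show ?thesis using d real by (simp add: power2_less_imp_less)
  qed (use d_pos N_large in auto)
  then have N: "0 < N" and "ereal r < delta_bar A B Q R qc q" by auto
  then obtain \<delta> where \<delta>: "\<delta> \<in> S" "r < \<delta>"
    unfolding delta_bar_def S_def[symmetric] less_Sup_iff by auto
  have "0 \<le> r" using L by (simp add: r_def)
  with \<delta>(2) have "r\<^sup>2 < \<delta>\<^sup>2" by (rule power_strict_mono) simp_all
  moreover have "L = 2 * real N * r\<^sup>2" using L N by (simp add: r_def)
  ultimately have "L < 2 * real N * \<delta>\<^sup>2" using N by simp
  with \<delta>(1) show thesis using that unfolding S_def by blast
qed

theorem lemma3:
  fixes A Q :: "real^'n^'n" and B :: "real^'m^'n" and R :: "real^'m^'m"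
    and M :: "(real^'n) measure"
    and q qc \<beta> :: real and Nq :: nat
  assumes stab: "stabilizable A B"
    and Q_pd: "posdef Q" and R_pd: "posdef R"
    and M_prob: "prob_space M" and M_sets: "sets M = sets borel"
    and M_cov: "integrable M (\<lambda>x. x \<bullet> x)"
    and q_range: "0 < q" "q < 1"
    and qc_le: "qc \<le> 1"
    and qc_crit: "\<forall>p. 0 \<le> p \<and> p < qc \<longrightarrow> (\<exists>!X. posdef X \<and> mre A B Q R p X)"
    and q_lt_qc: "q < qc"
    and beta: "0 < \<beta>" "\<beta> < 1"
    and delta_pos: "delta_bar A B Q R qc q > 0"
    and Nq_large: "ereal (real Nq) > ereal (ln (2 / \<beta>)) / (2 * (delta_bar A B Q R qc q)\<^sup>2)"
  shows "measure_pmf.prob (Pi_pmf {1..Nq} False (\<lambda>_. bernoulli_pmf (1 - q)))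
           {lam. qhat Nq lam < qc \<longrightarrow> ms_stabilizes A B (Khat A B Q R (qhat Nq lam)) q M}
         \<ge> 1 - \<beta>"
proof -
  (* Stabilizability, positive definiteness of Q, qc \<le> 1 and q < qc only make the setting
     meaningful; the estimate itself needs just the Riccati solutions below qc. *)
  have L: "0 < ln (2 / \<beta>)" using beta by simp
  obtain \<delta> where \<delta>: "0 \<le> \<delta>"
    and C_pd: "\<And>qh. 0 \<le> qh \<Longrightarrow> qh < qc \<Longrightarrow> q - qh < \<delta> \<Longrightarrow> posdef (Cmat A B Q R q qh)"
    and Nq_\<delta>: "ln (2 / \<beta>) < 2 * real Nq * \<delta>\<^sup>2"
    using delta_bar_witness[OF L delta_pos Nq_large] by blast
  have Nq: "0 < Nq" using L Nq_\<delta> by (cases Nq) auto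
  have "exp (- 2 * real Nq * \<delta>\<^sup>2) < exp (- ln (2 / \<beta>))" using Nq_\<delta> by simp
  also have "\<dots> = \<beta> / 2" using beta by (simp add: exp_minus)
  finally have "1 - \<beta> \<le> 1 - exp (- 2 * real Nq * \<delta>\<^sup>2)" using beta by simp
  also have "\<dots> \<le> measure_pmf.prob (Pi_pmf {1..Nq} False (\<lambda>_. bernoulli_pmf (1 - q)))
                    {lam. q - qhat Nq lam < \<delta>}"
    using prob_qhat_close_ge[OF _ _ Nq \<delta>] q_range by simp
  also have "\<dots> \<le> measure_pmf.prob (Pi_pmf {1..Nq} False (\<lambda>_. bernoulli_pmf (1 - q)))
           {lam. qhat Nq lam < qc \<longrightarrow> ms_stabilizes A B (Khat A B Q R (qhat Nq lam)) q M}"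
    using ms_stabilizes_Khat[OF R_pd M_prob M_sets M_cov] qc_crit C_pd qhat_nonneg q_range
    by (intro measure_pmf.finite_measure_mono) auto
  finally show ?thesis .
qed

end
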